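(* The run-length encoding of $(a(n))_{n\ge 0}$ is the sequence $1,\,2-\mathbf f[0],\,2-\mathbf f[1],\,2-\mathbf f[2],\,\ldots$ (OEIS A001468).
   Context: Let $(F_n)_{n\ge 0}$ be the Fibonacci numbers: $F_0=0$, $F_1=1$, $F_n=F_{n-1}+F_{n-2}$ for $n\ge 2$. Define $(a(n))_{n\ge 0}$ (OEIS A105774) by $a(0)=0$, $a(1)=1$, and for $n\ge 2$, $a(n)=F_{j+1}-a(n-F_j)$, where $j\ge 2$ is the unique index with $F_j<n\le F_{j+1}$. The run-length encoding of a sequence is the sequence of lengths of its successive maximal blocks of consecutive equal terms. $\mathbf f=\mathbf f[0]\mathbf f[1]\mathbf f[2]\cdots=01001010\cdots$ is the infinite Fibonacci word, the fixed point of the morphism $0\mapsto 01$, $1\mapsto 0$. *)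

theory Defs
  imports "HOL-Number_Theory.Fib"
begin

definition fib_idx :: "nat \<Rightarrow> nat" where
  "fib_idx n = (THE j. 2 \<le> j \<and> fib j < n \<and> n \<le> fib (Suc j))"

lemma fib_Suc_ge: "k \<le> fib (Suc k)"
proof (induction k rule: nat_less_induct)
  case (1 k)
  show ?case
  proof (cases k)
    case 0 then show ?thesis by simp
  next
    case (Suc m)
    then show ?thesis using 1 fib_neq_0_nat[of m]
      by (cases m) (auto simp: Suc)
  qed
qed

lemma fib_idx_ex1:
  assumes "2 \<le> n"
  shows "\<exists>!j. 2 \<le> j \<and> fib j < n \<and> n \<le> fib (Suc j)"
proof -
  let ?P = "\<lambda>j. n \<le> fib (Suc j)"
  have ex: "?P n" using fib_Suc_ge[of n] by simp
  define j where "j = (LEAST j. ?P j)"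
  have Pj: "?P j" unfolding j_def using LeastI[of ?P n] ex by simp
  have j2: "2 \<le> j"
  proof (rule ccontr)
    assume "\<not> 2 \<le> j"
    then have "j = 0 \<or> j = 1" by auto
    then show False using Pj assms by (auto simp: numeral_2_eq_2)
  qed
  have lt: "fib j < n"
  proof -
    have "\<not> ?P (j - 1)" unfolding j_def
      using j2 not_less_Least[of "j - 1" ?P] j_def by auto
    then show ?thesis using j2 by (simp add: Suc_diff_1)
  qed
  show ?thesis
  proof (rule ex1I[of _ j])
    show "2 \<le> j \<and> fib j < n \<and> n \<le> fib (Suc j)" using j2 lt Pj by simp
  next
    fix i assume i: "2 \<le> i \<and> fib i < n \<and> n \<le> fib (Suc i)"
    show "i = j"
    proof (rule ccontr)
      assume "i \<noteq> j"
      then have "Suc i \<le> j \<or> Suc j \<le> i" by auto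
      then show False
        using fib_mono[of "Suc i" j] fib_mono[of "Suc j" i] i lt Pj by auto
    qed
  qed
qed

lemma fib_idx_prop:
  assumes "2 \<le> n"
  shows "2 \<le> fib_idx n \<and> fib (fib_idx n) < n \<and> n \<le> fib (Suc (fib_idx n))"
  unfolding fib_idx_def using theI'[OF fib_idx_ex1[OF assms]] .

text \<open>OEIS A105774, valued in int so that no truncated subtraction occurs.\<close>
function a105774 :: "nat \<Rightarrow> int" where
  "a105774 n = (if n = 0 then 0 else if n = 1 then 1
     else int (fib (Suc (fib_idx n))) - a105774 (n - fib (fib_idx n)))"
  by auto
termination
proof (relation "measure id")
  show "wf (measure id)" by simp
next
  fix n :: nat assume "\<not> n = 0" "\<not> n = 1"
  then have "2 \<le> n" by auto
  from fib_idx_prop[OF this] have "0 < fib (fib_idx n)" using fib_neq_0_nat by auto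
  then show "(n - fib (fib_idx n), n) \<in> measure id" using \<open>\<not> n = 0\<close> by simp
qed

text \<open>The Fibonacci morphism 0 \<mapsto> 01, 1 \<mapsto> 0, and the infinite Fibonacci word
  as its fixed point: f[i] is the i-th letter of phi^(i+1)(0), a prefix of the fixed point
  of length F_(i+3) > i.\<close>
definition fib_morph :: "nat list \<Rightarrow> nat list" where
  "fib_morph w = concat (map (\<lambda>c. if c = 0 then [0, 1] else [0]) w)"

definition fibword :: "nat \<Rightarrow> nat" where
  "fibword i = ((fib_morph ^^ Suc i) [0]) ! i"

text \<open>r is the run-length encoding of the infinite sequence x: x splits into consecutive
  nonempty blocks [s k, s (k+1)) of lengths r k, each constant, adjacent blocks
  having different values (so the blocks are maximal).\<close>
definition is_run_length_encoding :: "(nat \<Rightarrow> 'a) \<Rightarrow> (nat \<Rightarrow> nat) \<Rightarrow> bool" where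
  "is_run_length_encoding x r \<longleftrightarrow>
     (\<forall>k. 0 < r k) \<and>
     (\<forall>k i. (\<Sum>m<k. r m) \<le> i \<and> i < (\<Sum>m<Suc k. r m) \<longrightarrow> x i = x (\<Sum>m<k. r m)) \<and>
     (\<forall>k. x (\<Sum>m<Suc k. r m) \<noteq> x (\<Sum>m<k. r m))"

end

theory Submission
  imports Defs "HOL-Library.Sublist"
begin

text \<open>Write A_j for the list a(1), ..., a(F_(j+1)). The recursion of a gives
  A_(j+2) = A_(j+1) followed by F_(j+3) - A_j, just as the Fibonacci word prefixes satisfy
  phi^(n+2)(0) = phi^(n+1)(0) phi^n(0). Reflecting the values preserves the run lengths, and no two
  runs merge at the junction, since a(F_(j+2)) \<le> F_(j+2) < F_(j+3) - a(1). By induction the run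
  lengths of A_(n+2) are therefore 2 - f[i] for i < F_(n+2); the value a(0) = 0 adds the leading 1.\<close>

inductive is_rle_list :: "'a list \<Rightarrow> nat list \<Rightarrow> bool" where
  Nil: "is_rle_list [] []"
| Cons: "0 < l \<Longrightarrow> is_rle_list xs rs \<Longrightarrow> (xs = [] \<or> hd xs \<noteq> v)
    \<Longrightarrow> is_rle_list (replicate l v @ xs) (l # rs)"

lemma is_rle_list_append:
  assumes "is_rle_list xs rs" "is_rle_list ys qs"
    and "xs \<noteq> [] \<Longrightarrow> ys \<noteq> [] \<Longrightarrow> last xs \<noteq> hd ys"
  shows "is_rle_list (xs @ ys) (rs @ qs)"
  using assms
proof (induction rule: is_rle_list.induct)
  case Nil
  then show ?case by simp
next
  case (Cons l xs rs v)
  have "is_rle_list (xs @ ys) (rs @ qs)"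
    using Cons by (cases "xs = []") auto
  moreover have "xs @ ys = [] \<or> hd (xs @ ys) \<noteq> v"
    using Cons by (cases "xs = []"; cases "ys = []") (auto simp: last_append)
  ultimately show ?case using is_rle_list.Cons[OF Cons(1)] by fastforce
qed

lemma is_rle_list_map_inj:
  assumes "is_rle_list xs rs" "inj f"
  shows "is_rle_list (map f xs) rs"
  using assms
proof (induction rule: is_rle_list.induct)
  case Nil
  then show ?case by (simp add: is_rle_list.Nil)
next
  case (Cons l xs rs v)
  have "map f xs = [] \<or> hd (map f xs) \<noteq> f v"
    using Cons by (cases xs) (auto dest: injD)
  then show ?case using is_rle_list.Cons[OF Cons(1) Cons.IH[OF Cons.prems]] by simp
qed

lemma is_rle_list_sum_list: "is_rle_list xs rs \<Longrightarrow> sum_list rs = length xs"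
  by (induction rule: is_rle_list.induct) auto

lemma is_rle_list_pos: "is_rle_list xs rs \<Longrightarrow> r \<in> set rs \<Longrightarrow> 0 < r"
  by (induction rule: is_rle_list.induct) auto

lemma is_rle_list_nth_run:
  assumes "is_rle_list xs rs" "k < length rs"
    and "sum_list (take k rs) \<le> i" "i < sum_list (take (Suc k) rs)"
  shows "xs ! i = xs ! sum_list (take k rs)"
  using assms
proof (induction arbitrary: k i rule: is_rle_list.induct)
  case Nil
  then show ?case by simp
next
  case (Cons l xs rs v)
  show ?case
  proof (cases k)
    case 0
    then show ?thesis using Cons.prems Cons.hyps(1) by (simp add: nth_append)
  next
    case (Suc k')
    then have "xs ! (i - l) = xs ! sum_list (take k' rs)"
      using Cons.prems by (intro Cons.IH) auto
    then show ?thesis using Cons.prems Suc by (simp add: nth_append)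
  qed
qed

lemma is_rle_list_nth_boundary:
  assumes "is_rle_list xs rs" "Suc k < length rs"
  shows "xs ! sum_list (take (Suc k) rs) \<noteq> xs ! sum_list (take k rs)"
  using assms
proof (induction arbitrary: k rule: is_rle_list.induct)
  case Nil
  then show ?case by simp
next
  case (Cons l xs rs v)
  show ?case
  proof (cases k)
    case 0
    have "rs \<noteq> []" using Cons.prems 0 by simp
    then have "xs \<noteq> []"
      using Cons.hyps(2) is_rle_list_pos[OF Cons.hyps(2)] is_rle_list_sum_list[OF Cons.hyps(2)]
      by (cases rs) fastforce+
    then show ?thesis using 0 Cons.hyps by (simp add: nth_append hd_conv_nth)
  next
    case (Suc k')
    then show ?thesis using Cons.IH[of k'] Cons.prems by (simp add: nth_append)
  qed
qed

lemma sum_list_take_map_upt: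
  "k \<le> L \<Longrightarrow> sum_list (take k (map r [0..<L])) = (\<Sum>m<k. r m)"
  by (simp add: take_map interv_sum_list_conv_sum_set_nat atLeast0LessThan)

lemma is_run_length_encodingI:
  assumes "\<And>K. \<exists>L N. K < L \<and> is_rle_list (map x [0..<N]) (map r [0..<L])"
  shows "is_run_length_encoding x r"
  unfolding is_run_length_encoding_def
proof (intro conjI allI impI)
  fix k
  obtain L N where L: "Suc (Suc k) < L" and rle: "is_rle_list (map x [0..<N]) (map r [0..<L])"
    using assms by blast
  have sums: "sum_list (take j (map r [0..<L])) = (\<Sum>m<j. r m)" if "j \<le> L" for j
    using that by (rule sum_list_take_map_upt)
  have total: "(\<Sum>m<L. r m) = N"
    using is_rle_list_sum_list[OF rle] sums[of L] by simp
  have bounded: "(\<Sum>m<j. r m) \<le> N" if "j \<le> L" for j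
    unfolding total[symmetric] using that by (intro sum_mono2) auto
  have pos: "0 < r j" if "j < L" for j
    using is_rle_list_pos[OF rle] that by auto
  show "0 < r k" using pos L by simp
  have below_N: "(\<Sum>m<Suc k. r m) < N"
    using bounded[of "Suc (Suc k)"] pos[of "Suc k"] L by simp
  show "x i = x (\<Sum>m<k. r m)" if "(\<Sum>m<k. r m) \<le> i \<and> i < (\<Sum>m<Suc k. r m)" for i
    using is_rle_list_nth_run[OF rle, of k i] that below_N L sums[of k] sums[of "Suc k"]
    by simp
  show "x (\<Sum>m<Suc k. r m) \<noteq> x (\<Sum>m<k. r m)"
    using is_rle_list_nth_boundary[OF rle, of k] below_N L sums[of k] sums[of "Suc k"] pos[of k]
    by simp
qed

lemma fib_morph_append: "fib_morph (xs @ ys) = fib_morph xs @ fib_morph ys"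
  by (simp add: fib_morph_def)

lemma funpow_fib_morph_append:
  "(fib_morph ^^ n) (xs @ ys) = (fib_morph ^^ n) xs @ (fib_morph ^^ n) ys"
  by (induction n) (simp_all add: fib_morph_append)

definition fibword_prefix :: "nat \<Rightarrow> nat list" where
  "fibword_prefix n = (fib_morph ^^ n) [0]"

lemma fibword_prefix_0: "fibword_prefix 0 = [0]"
  by (simp add: fibword_prefix_def)

lemma fibword_prefix_1: "fibword_prefix (Suc 0) = [0, 1]"
  by (simp add: fibword_prefix_def fib_morph_def)

lemma fibword_prefix_Suc_Suc:
  "fibword_prefix (Suc (Suc n)) = fibword_prefix (Suc n) @ fibword_prefix n"
proof -
  have "fibword_prefix (Suc (Suc n)) = (fib_morph ^^ Suc n) ([0] @ [1])"
    by (simp add: fibword_prefix_def funpow_Suc_right fib_morph_def del: funpow.simps)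
  also have "\<dots> = fibword_prefix (Suc n) @ (fib_morph ^^ Suc n) [1]"
    by (simp only: funpow_fib_morph_append fibword_prefix_def)
  also have "(fib_morph ^^ Suc n) [1] = fibword_prefix n"
    by (simp add: fibword_prefix_def funpow_Suc_right fib_morph_def del: funpow.simps)
  finally show ?thesis .
qed

lemma length_fibword_prefix: "length (fibword_prefix n) = fib (Suc (Suc n))"
  by (induction n rule: fib.induct)
    (simp_all add: fibword_prefix_0 fibword_prefix_1 fibword_prefix_Suc_Suc numeral_2_eq_2)

lemma prefix_fibword_prefix: "n \<le> m \<Longrightarrow> prefix (fibword_prefix n) (fibword_prefix m)"
proof (induction m rule: dec_induct)
  case (step m)
  have "prefix (fibword_prefix m) (fibword_prefix (Suc m))"
    by (cases m) (auto simp: fibword_prefix_0 fibword_prefix_1 fibword_prefix_Suc_Suc)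
  with step.IH show ?case
    by (rule prefix_order.trans)
qed simp

lemma prefix_nth: "prefix xs ys \<Longrightarrow> i < length xs \<Longrightarrow> xs ! i = ys ! i"
  by (auto simp: prefix_def nth_append)

lemma nth_fibword_prefix:
  assumes "i < length (fibword_prefix n)"
  shows "fibword_prefix n ! i = fibword i"
proof -
  have "i < length (fibword_prefix (Suc i))"
    using length_fibword_prefix[of "Suc i"] fib_Suc_ge[of "Suc (Suc i)"] by simp
  then have "fibword_prefix n ! i = fibword_prefix (Suc i) ! i"
    using assms prefix_fibword_prefix[of n "Suc i"] prefix_fibword_prefix[of "Suc i" n]
    by (cases "n \<le> Suc i") (auto simp: prefix_nth)
  then show ?thesis
    by (simp add: fibword_def fibword_prefix_def)
qed

declare a105774.simps [simp del]

lemma a105774_0 [simp]: "a105774 0 = 0"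
  by (simp add: a105774.simps)

lemma a105774_1 [simp]: "a105774 (Suc 0) = 1" "a105774 1 = 1"
  by (simp_all add: a105774.simps)

lemma fib_idx_eqI:
  assumes "2 \<le> j" "fib j < n" "n \<le> fib (Suc j)"
  shows "fib_idx n = j"
proof -
  have "2 \<le> n"
    using assms fib_neq_0_nat[of j] by simp
  then show ?thesis
    using fib_idx_ex1 fib_idx_prop assms by blast
qed

lemma a105774_fib_plus:
  assumes "0 < m" "m \<le> fib (Suc i)"
  shows "a105774 (fib (Suc (Suc i)) + m) = int (fib (Suc (Suc (Suc i)))) - a105774 m"
proof -
  have "fib_idx (fib (Suc (Suc i)) + m) = Suc (Suc i)"
    using assms by (intro fib_idx_eqI) auto
  then show ?thesis
    using assms by (subst a105774.simps) simp
qed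

lemma a105774_fib_bounds: "0 \<le> a105774 (fib n) \<and> a105774 (fib n) \<le> int (fib n)"
proof (induction n rule: fib.induct)
  case (3 n)
  show ?case
  proof (cases n)
    case 0
    then show ?thesis by (simp add: numeral_2_eq_2)
  next
    case (Suc k)
    have "a105774 (fib (Suc (Suc n))) = int (fib (Suc (Suc n))) - a105774 (fib n)"
      using a105774_fib_plus[of "fib n" k] Suc fib_neq_0_nat[of n] by (simp add: add.commute)
    with "3.IH"(2) show ?thesis
      using fib_mono[of n "Suc (Suc n)"] by simp
  qed
qed simp_all

definition a105774_seg :: "nat \<Rightarrow> int list" where
  "a105774_seg j = map a105774 [1..<Suc (fib (Suc j))]"

lemma a105774_seg_Suc_Suc:
  "a105774_seg (Suc (Suc i)) =
     a105774_seg (Suc i) @ map (\<lambda>v. int (fib (Suc (Suc (Suc i)))) - v) (a105774_seg i)"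
proof -
  have upt_split: "[1..<Suc (p + q)] = [1..<Suc p] @ map (\<lambda>m. p + m) [1..<Suc q]" for p q :: nat
    by (induction q) auto
  have "[1..<Suc (fib (Suc (Suc (Suc i))))] =
      [1..<Suc (fib (Suc (Suc i)))] @ map (\<lambda>m. fib (Suc (Suc i)) + m) [1..<Suc (fib (Suc i))]"
    using upt_split[of "fib (Suc (Suc i))" "fib (Suc i)"] by simp
  moreover have "map (\<lambda>m. a105774 (fib (Suc (Suc i)) + m)) [1..<Suc (fib (Suc i))] =
      map (\<lambda>m. int (fib (Suc (Suc (Suc i)))) - a105774 m) [1..<Suc (fib (Suc i))]"
    by (intro map_cong refl a105774_fib_plus) auto
  ultimately show ?thesis
    by (simp add: a105774_seg_def comp_def del: upt_Suc)
qed

lemma a105774_seg_nonempty: "a105774_seg j \<noteq> [] \<and> hd (a105774_seg j) = 1"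
  using fib_neq_0_nat[of "Suc j"]
  by (simp add: a105774_seg_def upt_conv_Cons del: upt_Suc)

lemma last_a105774_seg: "last (a105774_seg (Suc j)) = a105774 (fib (Suc (Suc j)))"
  using fib_neq_0_nat[of "Suc (Suc j)"] by (simp add: a105774_seg_def del: fib.simps)

lemma is_rle_list_a105774_seg:
  "is_rle_list (a105774_seg (Suc (Suc n))) (map (\<lambda>c. 2 - c) (fibword_prefix n))"
proof (induction n rule: fib.induct)
  case 1
  have "a105774_seg (Suc (Suc 0)) = replicate 2 1 @ []"
    using a105774_fib_plus[of 1 0]
    by (simp add: a105774_seg_def numeral_2_eq_2 numeral_3_eq_3 upt_rec)
  then show ?case
    using is_rle_list.Cons[OF _ is_rle_list.Nil, of 2 1] by (simp add: fibword_prefix_0)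
next
  case 2
  have "a105774_seg (Suc (Suc (Suc 0))) = replicate 2 1 @ [2]"
    using a105774_fib_plus[of 1 0] a105774_fib_plus[of 1 1]
    by (simp add: a105774_seg_def numeral_2_eq_2 numeral_3_eq_3 upt_rec)
  moreover have "is_rle_list [2::int] [1]"
    using is_rle_list.Cons[OF _ is_rle_list.Nil, of 1 2] by simp
  then have "is_rle_list (replicate 2 1 @ [2::int]) [2, 1]"
    using is_rle_list.Cons[of 2 "[2::int]" "[1]" 1] by simp
  ultimately show ?case
    by (simp add: fibword_prefix_1)
next
  case (3 n)
  let ?c = "int (fib (Suc (Suc (Suc (Suc (Suc n))))))"
  have complement: "is_rle_list (map (\<lambda>v. ?c - v) (a105774_seg (Suc (Suc n))))
      (map (\<lambda>c. 2 - c) (fibword_prefix n))"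
    using "3.IH"(2) by (rule is_rle_list_map_inj) (auto intro: injI)
  have "2 \<le> fib (Suc (Suc (Suc n)))"
    using fib_mono[of 3 "Suc (Suc (Suc n))"] by (simp add: numeral_3_eq_3 numeral_2_eq_2)
  then have "last (a105774_seg (Suc (Suc (Suc n)))) \<noteq> ?c - 1"
    using a105774_fib_bounds[of "Suc (Suc (Suc (Suc n)))"] by (simp add: last_a105774_seg)
  then show ?case
    using is_rle_list_append[OF "3.IH"(1) complement] a105774_seg_nonempty[of "Suc (Suc n)"]
    by (simp add: a105774_seg_Suc_Suc[of "Suc (Suc n)"] fibword_prefix_Suc_Suc hd_map)
qed

theorem theorem19:
  shows "is_run_length_encoding a105774
           (\<lambda>k. if k = 0 then 1 else 2 - fibword (k - 1))"
proof (rule is_run_length_encodingI)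
  fix K
  let ?r = "\<lambda>k. if k = 0 then 1 else 2 - fibword (k - 1)"
  have "is_rle_list [0::int] [1]"
    using is_rle_list.Cons[of 1 "[]" "[]" "0::int"] is_rle_list.Nil by simp
  then have "is_rle_list ([0] @ a105774_seg (Suc (Suc K))) ([1] @ map (\<lambda>c. 2 - c) (fibword_prefix K))"
    using is_rle_list_append is_rle_list_a105774_seg a105774_seg_nonempty by fastforce
  moreover have "[0] @ a105774_seg (Suc (Suc K)) = map a105774 [0..<Suc (fib (Suc (Suc (Suc K))))]"
    by (simp add: a105774_seg_def upt_conv_Cons del: upt_Suc)
  moreover have "[1] @ map (\<lambda>c. 2 - c) (fibword_prefix K) = map ?r [0..<Suc (fib (Suc (Suc K)))]"
    by (rule nth_equalityI)
      (auto simp: length_fibword_prefix nth_fibword_prefix nth_Cons' simp del: upt_Suc)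
  moreover have "K < Suc (fib (Suc (Suc K)))"
    using fib_Suc_ge[of "Suc K"] fib_mono[of "Suc K" "Suc (Suc K)"] by simp
  ultimately show "\<exists>L N. K < L \<and> is_rle_list (map a105774 [0..<N]) (map ?r [0..<L])"
    by metis
qed

end
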